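(* There exists an operator $T\in B(\ell^2)$ which is similar to a contraction but whose mean transform $M(T)$ is not power bounded, i.e. $\sup_{n\ge1}\|M(T)^n\|=\infty$.
   Context: For $T\in B(H)$ with polar decomposition $T=V|T|$ ($|T|=(T^*T)^{1/2}$, $V$ the partial isometry with $\ker V=\ker T$), the mean transform is $M(T)=\frac12(|T|V+V|T|)$. $T$ is similar to a contraction if there is an invertible $L\in B(H)$ with $\|L^{-1}TL\|\le1$. *)

theory Defs
  imports Complex_Main
begin

text \<open>Operators are total functions on sequences; a bounded
  operator maps l2 into l2, is linear and bounded on l2, and (normalisation) sends
  every sequence outside l2 to 0, so operator equality is equality on l2.\<close>

definition l2 :: "(nat \<Rightarrow> complex) set" where
  "l2 = {x. summable (\<lambda>n. (cmod (x n))\<^sup>2)}"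

definition l2norm :: "(nat \<Rightarrow> complex) \<Rightarrow> real" where
  "l2norm x = sqrt (\<Sum>n. (cmod (x n))\<^sup>2)"

definition l2inner :: "(nat \<Rightarrow> complex) \<Rightarrow> (nat \<Rightarrow> complex) \<Rightarrow> complex" where
  "l2inner x y = (\<Sum>n. x n * cnj (y n))"

type_synonym op = "(nat \<Rightarrow> complex) \<Rightarrow> (nat \<Rightarrow> complex)"

definition bounded_op :: "op \<Rightarrow> bool" where
  "bounded_op T \<longleftrightarrow>
     (\<forall>x\<in>l2. T x \<in> l2) \<and>
     (\<forall>x\<in>l2. \<forall>y\<in>l2. \<forall>a b. T (\<lambda>n. a * x n + b * y n) = (\<lambda>n. a * T x n + b * T y n)) \<and>
     (\<exists>C. \<forall>x\<in>l2. l2norm (T x) \<le> C * l2norm x) \<and>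
     (\<forall>x. x \<notin> l2 \<longrightarrow> T x = (\<lambda>_. 0))"

definition opnorm :: "op \<Rightarrow> real" where
  "opnorm T = Sup {l2norm (T x) | x. x \<in> l2 \<and> l2norm x \<le> 1}"

definition kernel :: "op \<Rightarrow> (nat \<Rightarrow> complex) set" where
  "kernel T = {x \<in> l2. T x = (\<lambda>_. 0)}"

definition orth_compl :: "(nat \<Rightarrow> complex) set \<Rightarrow> (nat \<Rightarrow> complex) set" where
  "orth_compl K = {y \<in> l2. \<forall>x\<in>K. l2inner x y = 0}"

definition adj :: "op \<Rightarrow> op" where
  "adj T = (THE S. bounded_op S \<and> (\<forall>x\<in>l2. \<forall>y\<in>l2. l2inner (T x) y = l2inner x (S y)))"

definition positive_op :: "op \<Rightarrow> bool" where
  "positive_op S \<longleftrightarrow> bounded_op S \<and>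
     (\<forall>x\<in>l2. Im (l2inner (S x) x) = 0 \<and> Re (l2inner (S x) x) \<ge> 0)"

definition absop :: "op \<Rightarrow> op" where
  "absop T = (THE S. positive_op S \<and> S \<circ> S = adj T \<circ> T)"

definition partial_isometry :: "op \<Rightarrow> bool" where
  "partial_isometry V \<longleftrightarrow> bounded_op V \<and>
     (\<forall>x \<in> orth_compl (kernel V). l2norm (V x) = l2norm x)"

definition polarV :: "op \<Rightarrow> op" where
  "polarV T = (THE V. partial_isometry V \<and> kernel V = kernel T \<and> T = V \<circ> absop T)"

definition mean_transform :: "op \<Rightarrow> op" where
  "mean_transform T = (\<lambda>x n. (absop T (polarV T x) n + polarV T (absop T x) n) / 2)"

definition similar_to_contraction :: "op \<Rightarrow> bool" where
  "similar_to_contraction T \<longleftrightarrow>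
     (\<exists>L Linv. bounded_op L \<and> bounded_op Linv \<and>
        (\<forall>x\<in>l2. Linv (L x) = x \<and> L (Linv x) = x) \<and>
        opnorm (Linv \<circ> T \<circ> L) \<le> 1)"

definition power_bounded :: "op \<Rightarrow> bool" where
  "power_bounded T \<longleftrightarrow> (\<exists>C. \<forall>n\<ge>1. opnorm (T ^^ n) \<le> C)"

end

theory Submission
  imports Defs "HOL-Analysis.Infinite_Sum"
begin

text \<open>Let V be the unitary operator swapping the basis vectors e(2k) and e(2k+1), and
  A = diag(2, 1/2, 2, 1/2, ...). The operator T = V A is an involution; conjugating it by
  diag(1, 2, 1, 2, ...) gives V, so T is similar to a contraction. Its polar decomposition is
  T = V A, hence M(T) = (A V + V A)/2, and since 2 and 1/2 average to 5/4 on every pair of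
  coordinates, M(T) = (5/4) V. Thus the norm of M(T)^n is (5/4)^n.\<close>

lemma suminf_reindex_bij:
  fixes f :: "nat \<Rightarrow> 'a::banach"
  assumes p: "bij p" and s: "summable (\<lambda>n. norm (f n))"
  shows "summable (\<lambda>n. norm (f (p n)))" and "(\<Sum>n. f (p n)) = suminf f"
proof -
  have "(f has_sum suminf f) UNIV"
    using norm_summable_imp_has_sum[OF s] s summable_norm_cancel summable_sums by blast
  hence "((\<lambda>n. f (p n)) has_sum suminf f) UNIV" using has_sum_reindex_bij_betw[OF p] by blast
  thus "(\<Sum>n. f (p n)) = suminf f" using has_sum_imp_sums sums_unique by metis
  have "((\<lambda>n. norm (f n)) has_sum suminf (\<lambda>n. norm (f n))) UNIV"
    using norm_summable_imp_has_sum[of "\<lambda>n. norm (f n)"] s summable_sums by auto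
  hence "((\<lambda>n. norm (f (p n))) has_sum suminf (\<lambda>n. norm (f n))) UNIV"
    using has_sum_reindex_bij_betw[OF p, of "\<lambda>n. norm (f n)"] by blast
  thus "summable (\<lambda>n. norm (f (p n)))" using has_sum_imp_sums sums_summable by blast
qed

lemma l2_summable: "x \<in> l2 \<Longrightarrow> summable (\<lambda>n. (cmod (x n))\<^sup>2)"
  by (simp add: l2_def)

lemma zero_in_l2 [simp]: "(\<lambda>_. 0) \<in> l2"
  by (simp add: l2_def)

lemma l2norm_zero [simp]: "l2norm (\<lambda>_. 0) = 0"
  by (simp add: l2norm_def)

lemma l2_reindex:
  assumes "bij p" and "x \<in> l2"
  shows "(\<lambda>n. x (p n)) \<in> l2" and "l2norm (\<lambda>n. x (p n)) = l2norm x"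
proof -
  have s: "summable (\<lambda>n. norm ((cmod (x n))\<^sup>2))" using l2_summable[OF assms(2)] by simp
  show "(\<lambda>n. x (p n)) \<in> l2" using suminf_reindex_bij(1)[OF assms(1) s] by (simp add: l2_def)
  show "l2norm (\<lambda>n. x (p n)) = l2norm x"
    using suminf_reindex_bij(2)[OF assms(1) s] by (simp add: l2norm_def)
qed

lemma l2_mult:
  assumes x: "x \<in> l2" and B: "\<And>n. cmod (d n) \<le> B"
  shows "(\<lambda>n. d n * x n) \<in> l2" and "l2norm (\<lambda>n. d n * x n) \<le> B * l2norm x"
proof -
  have B0: "B \<ge> 0" using B[of 0] norm_ge_zero order_trans by blast
  have le: "(cmod (d n * x n))\<^sup>2 \<le> B\<^sup>2 * (cmod (x n))\<^sup>2" for n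
    by (simp add: norm_mult power_mult_distrib mult_right_mono power_mono B)
  have s: "summable (\<lambda>n. B\<^sup>2 * (cmod (x n))\<^sup>2)" using l2_summable[OF x] summable_mult by blast
  have s': "summable (\<lambda>n. (cmod (d n * x n))\<^sup>2)"
    by (rule summable_comparison_test'[OF s]) (use le in auto)
  thus "(\<lambda>n. d n * x n) \<in> l2" by (simp add: l2_def)
  have "(\<Sum>n. (cmod (d n * x n))\<^sup>2) \<le> (\<Sum>n. B\<^sup>2 * (cmod (x n))\<^sup>2)"
    by (rule suminf_le[OF le s' s])
  also have "\<dots> = B\<^sup>2 * (\<Sum>n. (cmod (x n))\<^sup>2)" using suminf_mult l2_summable[OF x] by blast
  finally have "sqrt (\<Sum>n. (cmod (d n * x n))\<^sup>2) \<le> sqrt (B\<^sup>2 * (\<Sum>n. (cmod (x n))\<^sup>2))"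
    using real_sqrt_le_mono by blast
  also have "\<dots> = B * l2norm x" using B0 by (simp add: real_sqrt_mult l2norm_def)
  finally show "l2norm (\<lambda>n. d n * x n) \<le> B * l2norm x" by (simp add: l2norm_def)
qed

lemma l2norm_scale:
  assumes "x \<in> l2"
  shows "l2norm (\<lambda>n. c * x n) = cmod c * l2norm x"
proof -
  have "(\<Sum>n. (cmod (c * x n))\<^sup>2) = (cmod c)\<^sup>2 * (\<Sum>n. (cmod (x n))\<^sup>2)"
    using suminf_mult[OF l2_summable[OF assms]] by (simp add: norm_mult power_mult_distrib)
  thus ?thesis by (simp add: l2norm_def real_sqrt_mult)
qed

lemma l2_lincomb:
  assumes "x \<in> l2" and "y \<in> l2"
  shows "(\<lambda>n. a * x n + b * y n) \<in> l2"
proof -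
  have le: "(cmod (a * x n + b * y n))\<^sup>2 \<le> 2 * (cmod (a * x n))\<^sup>2 + 2 * (cmod (b * y n))\<^sup>2" for n
  proof -
    have "(cmod (a * x n + b * y n))\<^sup>2 \<le> (cmod (a * x n) + cmod (b * y n))\<^sup>2"
      by (simp add: power_mono norm_triangle_ineq)
    also have "\<dots> \<le> 2 * (cmod (a * x n))\<^sup>2 + 2 * (cmod (b * y n))\<^sup>2"
      by (smt (verit) sum_squares_bound power2_sum zero_le_power2)
    finally show ?thesis .
  qed
  have "summable (\<lambda>n. 2 * (cmod (a * x n))\<^sup>2 + 2 * (cmod (b * y n))\<^sup>2)"
    using l2_summable[OF l2_mult(1)[OF assms(1), of "\<lambda>_. a"]]
      l2_summable[OF l2_mult(1)[OF assms(2), of "\<lambda>_. b"]]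
    by (intro summable_add summable_mult) auto
  thus ?thesis unfolding l2_def
    by (simp, rule summable_comparison_test') (use le in auto)
qed

lemma summable_l2inner:
  assumes "x \<in> l2" and "y \<in> l2"
  shows "summable (\<lambda>n. norm (x n * cnj (y n)))"
proof (rule summable_comparison_test'[OF summable_add[OF l2_summable[OF assms(1)] l2_summable[OF assms(2)]]])
  fix n
  have "2 * cmod (x n) * cmod (y n) \<le> (cmod (x n))\<^sup>2 + (cmod (y n))\<^sup>2" by (rule sum_squares_bound)
  moreover have "0 \<le> cmod (x n) * cmod (y n)" by simp
  moreover have "norm (norm (x n * cnj (y n))) = cmod (x n) * cmod (y n)" by (simp add: norm_mult)
  ultimately show "norm (norm (x n * cnj (y n))) \<le> (cmod (x n))\<^sup>2 + (cmod (y n))\<^sup>2"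
    by linarith
qed

lemma l2inner_scale_self:
  assumes "x \<in> l2"
  shows "l2inner (\<lambda>n. a * x n) x = a * complex_of_real ((l2norm x)\<^sup>2)"
proof -
  have s: "summable (\<lambda>n. (cmod (x n))\<^sup>2)" by (rule l2_summable[OF assms])
  have "l2inner (\<lambda>n. a * x n) x = (\<Sum>n. a * complex_of_real ((cmod (x n))\<^sup>2))"
    by (simp add: l2inner_def mult.assoc flip: complex_norm_square)
  also have "\<dots> = a * (\<Sum>n. complex_of_real ((cmod (x n))\<^sup>2))"
    by (rule suminf_mult[OF summable_of_real[OF s]])
  also have "\<dots> = a * complex_of_real ((l2norm x)\<^sup>2)"
    using suminf_of_real[OF s, where 'a=complex] suminf_nonneg[OF s] by (simp add: l2norm_def del: of_real_power)
  finally show ?thesis .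
qed

definition unit_vec :: "nat \<Rightarrow> nat \<Rightarrow> complex" where
  "unit_vec k = (\<lambda>n. if n = k then 1 else 0)"

lemma unit_vec_l2: "unit_vec k \<in> l2" and l2norm_unit_vec: "l2norm (unit_vec k) = 1"
proof -
  have "(\<lambda>n. (cmod (unit_vec k n))\<^sup>2) = (\<lambda>n. if n = k then 1 else 0)"
    by (auto simp: unit_vec_def)
  moreover have "(\<lambda>n. if n = k then (1::real) else 0) sums 1"
    using sums_single[of k "\<lambda>_. 1::real"] by simp
  ultimately show "unit_vec k \<in> l2" "l2norm (unit_vec k) = 1"
    by (auto simp: l2_def l2norm_def sums_iff)
qed

lemma l2inner_unit_vec: "l2inner (unit_vec k) z = cnj (z k)"
proof -
  have "(\<lambda>n. unit_vec k n * cnj (z n)) = (\<lambda>n. if n = k then cnj (z k) else 0)"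
    by (auto simp: unit_vec_def)
  thus ?thesis unfolding l2inner_def using sums_single[of k "\<lambda>_. cnj (z k)"] sums_unique by metis
qed

lemma l2norm_nonneg: "x \<in> l2 \<Longrightarrow> l2norm x \<ge> 0"
  by (simp add: l2norm_def suminf_nonneg l2_summable)

lemma bounded_op_l2: "bounded_op S \<Longrightarrow> x \<in> l2 \<Longrightarrow> S x \<in> l2"
  by (simp add: bounded_op_def)

lemma bounded_op_outside_l2: "bounded_op S \<Longrightarrow> x \<notin> l2 \<Longrightarrow> S x = (\<lambda>_. 0)"
  by (simp add: bounded_op_def)

lemma bounded_op_lincomb:
  "bounded_op S \<Longrightarrow> x \<in> l2 \<Longrightarrow> y \<in> l2 \<Longrightarrow>
    S (\<lambda>n. a * x n + b * y n) = (\<lambda>n. a * S x n + b * S y n)"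
  by (simp add: bounded_op_def)

lemma bounded_op_zero: "bounded_op S \<Longrightarrow> S (\<lambda>_. 0) = (\<lambda>_. 0)"
  using bounded_op_lincomb[of S "\<lambda>_. 0" "\<lambda>_. 0" 0 0] by simp

lemma bounded_op_eqI:
  assumes "bounded_op S" and "bounded_op S'" and "\<And>x. x \<in> l2 \<Longrightarrow> S x = S' x"
  shows "S = S'"
proof
  show "S x = S' x" for x
    by (cases "x \<in> l2") (simp_all add: assms bounded_op_outside_l2)
qed

lemma bounded_op_comp:
  assumes S: "bounded_op S" and T: "bounded_op T"
  shows "bounded_op (S \<circ> T)"
proof -
  obtain C where C: "\<And>x. x \<in> l2 \<Longrightarrow> l2norm (S x) \<le> C * l2norm x"
    using S unfolding bounded_op_def by blast
  obtain D where D: "\<And>x. x \<in> l2 \<Longrightarrow> l2norm (T x) \<le> D * l2norm x"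
    using T unfolding bounded_op_def by blast
  have C0: "C \<ge> 0"
    using C[OF unit_vec_l2] l2norm_nonneg[OF bounded_op_l2[OF S unit_vec_l2]]
    by (simp add: l2norm_unit_vec) (meson order_trans)
  have "l2norm (S (T x)) \<le> (C * D) * l2norm x" if "x \<in> l2" for x
    using C[OF bounded_op_l2[OF T that]] mult_left_mono[OF D[OF that] C0] by simp
  moreover have "S (T (\<lambda>n. a * x n + b * y n)) = (\<lambda>n. a * S (T x) n + b * S (T y) n)"
    if "x \<in> l2" "y \<in> l2" for x y a b
    using that by (simp add: bounded_op_lincomb[OF T] bounded_op_lincomb[OF S] bounded_op_l2[OF T])
  ultimately show ?thesis
    using S T by (auto simp: bounded_op_def bounded_op_zero)
qed

lemma opnorm_le:
  assumes "C \<ge> 0" and "\<And>x. x \<in> l2 \<Longrightarrow> l2norm (S x) \<le> C * l2norm x"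
  shows "opnorm S \<le> C"
  unfolding opnorm_def
proof (rule cSup_least)
  show "{l2norm (S x) |x. x \<in> l2 \<and> l2norm x \<le> 1} \<noteq> {}" using zero_in_l2 by fastforce
  fix r assume "r \<in> {l2norm (S x) |x. x \<in> l2 \<and> l2norm x \<le> 1}"
  then obtain x where "x \<in> l2" "l2norm x \<le> 1" "r = l2norm (S x)" by blast
  moreover have "C * l2norm x \<le> C" by (rule mult_left_le) fact+
  ultimately show "r \<le> C" using assms(2) by fastforce
qed

lemma l2norm_eq_0_iff:
  assumes "x \<in> l2"
  shows "l2norm x = 0 \<longleftrightarrow> x = (\<lambda>_. 0)"
proof -
  have "l2norm x = 0 \<longleftrightarrow> (\<Sum>n. (cmod (x n))\<^sup>2) = 0" by (simp add: l2norm_def)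
  also have "\<dots> \<longleftrightarrow> (\<forall>n. (cmod (x n))\<^sup>2 = 0)"
    using suminf_eq_zero_iff[OF l2_summable[OF assms]] by simp
  finally show ?thesis by (simp add: fun_eq_iff)
qed

lemma adj_eqI:
  assumes S: "bounded_op S"
    and adjoint: "\<And>x y. x \<in> l2 \<Longrightarrow> y \<in> l2 \<Longrightarrow> l2inner (T x) y = l2inner x (S y)"
  shows "adj T = S"
  unfolding adj_def
proof (rule the_equality)
  show "bounded_op S \<and> (\<forall>x\<in>l2. \<forall>y\<in>l2. l2inner (T x) y = l2inner x (S y))"
    using assms by blast
  fix S' assume S': "bounded_op S' \<and> (\<forall>x\<in>l2. \<forall>y\<in>l2. l2inner (T x) y = l2inner x (S' y))"
  show "S' = S"
  proof (rule bounded_op_eqI)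
    show "bounded_op S'" "bounded_op S" using S S' by blast+
    fix y assume y: "y \<in> l2"
    have "cnj (S' y k) = cnj (S y k)" for k
      using S' adjoint[OF unit_vec_l2 y] y unit_vec_l2 by (metis l2inner_unit_vec)
    thus "S' y = S y" by (simp add: fun_eq_iff)
  qed
qed

text \<open>The difference of the two sides would be an eigenvector of the positive operator A
  with the negative eigenvalue -c.\<close>

lemma positive_op_sqrt_eigenvector:
  assumes A: "positive_op A" and x: "x \<in> l2" and c: "c > 0"
    and AAx: "A (A x) = (\<lambda>n. of_real (c\<^sup>2) * x n)"
  shows "A x = (\<lambda>n. of_real c * x n)"
proof -
  have Ab: "bounded_op A" using A by (simp add: positive_op_def)
  define y where "y = (\<lambda>n. 1 * A x n + (- of_real c) * x n)"
  have y: "y \<in> l2" unfolding y_def by (rule l2_lincomb[OF bounded_op_l2[OF Ab x] x])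
  have Ay: "A y = (\<lambda>n. (- of_real c) * y n)"
    unfolding y_def bounded_op_lincomb[OF Ab bounded_op_l2[OF Ab x] x] AAx
    by (simp add: fun_eq_iff algebra_simps power2_eq_square)
  have "0 \<le> Re (l2inner (A y) y)" using A y by (simp add: positive_op_def)
  also have "\<dots> = - c * (l2norm y)\<^sup>2" unfolding Ay l2inner_scale_self[OF y] by simp
  finally have "l2norm y = 0" using c by (simp add: mult_le_0_iff)
  hence "y = (\<lambda>_. 0)" using l2norm_eq_0_iff[OF y] by simp
  thus ?thesis by (simp add: y_def fun_eq_iff)
qed

lemma polarV_eqI:
  assumes V: "partial_isometry V" "kernel V = kernel T" "T = V \<circ> absop T"
    and onto: "\<And>y. y \<in> l2 \<Longrightarrow> \<exists>z. absop T z = y"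
  shows "polarV T = V"
  unfolding polarV_def
proof (rule the_equality)
  show "partial_isometry V \<and> kernel V = kernel T \<and> T = V \<circ> absop T" using V by blast
  fix V' assume V': "partial_isometry V' \<and> kernel V' = kernel T \<and> T = V' \<circ> absop T"
  show "V' = V"
  proof (rule bounded_op_eqI)
    show "bounded_op V'" "bounded_op V" using V V' by (simp_all add: partial_isometry_def)
    fix y assume "y \<in> l2"
    then obtain z where "absop T z = y" using onto by blast
    thus "V' y = V y" using V V' by (metis comp_apply)
  qed
qed

lemma not_power_bounded_if_stretching:
  assumes M: "\<And>x. x \<in> l2 \<Longrightarrow> M x \<in> l2 \<and> l2norm (M x) = c * l2norm x" and c: "c > 1"
  shows "\<not> power_bounded M"
proof
  have pow: "(M ^^ k) x \<in> l2 \<and> l2norm ((M ^^ k) x) = c ^ k * l2norm x" if "x \<in> l2" for k x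
    using that by (induction k) (simp_all add: M)
  have norm_pow: "c ^ k \<le> opnorm (M ^^ k)" for k
    unfolding opnorm_def
  proof (rule cSup_upper)
    show "c ^ k \<in> {l2norm ((M ^^ k) x) |x. x \<in> l2 \<and> l2norm x \<le> 1}"
      using pow[OF unit_vec_l2, of k 0] unit_vec_l2 l2norm_unit_vec
      by (intro CollectI exI[of _ "unit_vec 0"]) simp
    have "c ^ k * l2norm x \<le> c ^ k" if "l2norm x \<le> 1" for x
      using c that by (simp add: mult_left_le)
    thus "bdd_above {l2norm ((M ^^ k) x) |x. x \<in> l2 \<and> l2norm x \<le> 1}"
      using pow by (intro bdd_aboveI[of _ "c ^ k"]) auto
  qed
  assume "power_bounded M"
  then obtain C where C: "\<And>n. n \<ge> 1 \<Longrightarrow> opnorm (M ^^ n) \<le> C"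
    by (auto simp: power_bounded_def)
  obtain n where n: "C < c ^ n" using real_arch_pow c by blast
  have "c ^ n \<le> c ^ Suc n" using c by simp
  also have "\<dots> \<le> opnorm (M ^^ Suc n)" by (rule norm_pow)
  also have "\<dots> \<le> C" by (rule C) simp
  finally show False using n by simp
qed

definition mult_op :: "(nat \<Rightarrow> complex) \<Rightarrow> op" where
  "mult_op d x = (if x \<in> l2 then (\<lambda>n. d n * x n) else (\<lambda>_. 0))"

definition perm_op :: "(nat \<Rightarrow> nat) \<Rightarrow> op" where
  "perm_op p x = (if x \<in> l2 then (\<lambda>n. x (p n)) else (\<lambda>_. 0))"

lemma bounded_op_mult_op:
  assumes B: "\<And>n. cmod (d n) \<le> B"
  shows "bounded_op (mult_op d)"
  unfolding bounded_op_def mult_op_def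
  using l2_mult[where d=d, OF _ B] l2_lincomb by (auto simp: fun_eq_iff algebra_simps intro!: exI[of _ B])

lemma bounded_op_perm_op:
  assumes "bij p"
  shows "bounded_op (perm_op p)"
  unfolding bounded_op_def perm_op_def
  using l2_reindex[OF assms] l2_lincomb by (auto intro!: exI[of _ 1])

lemma partial_isometry_perm_op: "bij p \<Longrightarrow> partial_isometry (perm_op p)"
  by (simp add: partial_isometry_def bounded_op_perm_op orth_compl_def perm_op_def l2_reindex)

lemma mult_op_comp:
  assumes "\<And>n. cmod (e n) \<le> B"
  shows "mult_op d \<circ> mult_op e = mult_op (\<lambda>n. d n * e n)"
  using l2_mult(1)[where d=e, OF _ assms] by (auto simp: fun_eq_iff mult_op_def)

lemma positive_op_mult_op:
  assumes r: "\<And>n. 0 \<le> r n" and B: "\<And>n. r n \<le> B"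
  shows "positive_op (mult_op (\<lambda>n. of_real (r n)))"
  unfolding positive_op_def
proof (intro conjI ballI)
  show "bounded_op (mult_op (\<lambda>n. of_real (r n)))" using r B by (intro bounded_op_mult_op) simp
  fix x assume x: "x \<in> l2"
  have s: "summable (\<lambda>n. r n * (cmod (x n))\<^sup>2)"
    by (rule summable_comparison_test'[OF summable_mult[OF l2_summable[OF x], of B]])
      (simp add: r B mult_right_mono)
  have "l2inner (mult_op (\<lambda>n. of_real (r n)) x) x = (\<Sum>n. of_real (r n * (cmod (x n))\<^sup>2))"
    using x by (simp add: l2inner_def mult_op_def mult.assoc flip: complex_norm_square)
  also have "\<dots> = of_real (\<Sum>n. r n * (cmod (x n))\<^sup>2)" by (rule suminf_of_real[OF s, symmetric])
  finally have "l2inner (mult_op (\<lambda>n. of_real (r n)) x) x = of_real (\<Sum>n. r n * (cmod (x n))\<^sup>2)" .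
  moreover have "(\<Sum>n. r n * (cmod (x n))\<^sup>2) \<ge> 0" by (rule suminf_nonneg[OF s]) (simp add: r)
  ultimately show "Im (l2inner (mult_op (\<lambda>n. of_real (r n)) x) x) = 0"
    "0 \<le> Re (l2inner (mult_op (\<lambda>n. of_real (r n)) x) x)" by simp_all
qed

lemma adj_perm_op_comp_mult_op:
  assumes p: "bij p" and B: "\<And>n. cmod (d n) \<le> B"
  shows "adj (perm_op p \<circ> mult_op d) = mult_op (\<lambda>n. cnj (d n)) \<circ> perm_op (inv p)"
proof (rule adj_eqI)
  have p': "bij (inv p)" by (rule bij_imp_bij_inv[OF p])
  show "bounded_op (mult_op (\<lambda>n. cnj (d n)) \<circ> perm_op (inv p))"
    using B by (intro bounded_op_comp bounded_op_mult_op bounded_op_perm_op p') simp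
  fix x y assume x: "x \<in> l2" and y: "y \<in> l2"
  define f where "f m = d m * (x m * cnj (y (inv p m)))" for m
  have s: "summable (\<lambda>m. norm (f m))"
  proof (rule summable_comparison_test'[OF summable_mult[OF summable_l2inner[OF x l2_reindex(1)[OF p' y]], of B]])
    show "norm (norm (f m)) \<le> B * norm (x m * cnj (y (inv p m)))" for m
      by (simp add: f_def norm_mult B mult_right_mono)
  qed
  have "l2inner ((perm_op p \<circ> mult_op d) x) y = (\<Sum>n. f (p n))"
    using x l2_mult(1)[where d=d, OF x B] bij_is_inj[OF p]
    by (simp add: l2inner_def perm_op_def mult_op_def f_def mult.assoc)
  also have "\<dots> = suminf f" by (rule suminf_reindex_bij(2)[OF p s])
  also have "\<dots> = l2inner x ((mult_op (\<lambda>n. cnj (d n)) \<circ> perm_op (inv p)) y)"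
    using y l2_reindex(1)[OF p' y]
    by (simp add: l2inner_def perm_op_def mult_op_def f_def[abs_def] algebra_simps)
  finally show "l2inner ((perm_op p \<circ> mult_op d) x) y
    = l2inner x ((mult_op (\<lambda>n. cnj (d n)) \<circ> perm_op (inv p)) y)" .
qed

lemma adj_perm_op_comp_mult_op_comp_self:
  assumes p: "bij p" and B: "\<And>n. cmod (d n) \<le> B"
  shows "adj (perm_op p \<circ> mult_op d) \<circ> (perm_op p \<circ> mult_op d)
    = mult_op (\<lambda>n. of_real ((cmod (d n))\<^sup>2))"
proof (rule bounded_op_eqI)
  have p': "bij (inv p)" by (rule bij_imp_bij_inv[OF p])
  show "bounded_op (adj (perm_op p \<circ> mult_op d) \<circ> (perm_op p \<circ> mult_op d))"
    unfolding adj_perm_op_comp_mult_op[OF p B]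
    using B by (intro bounded_op_comp bounded_op_mult_op bounded_op_perm_op p p') simp_all
  show "bounded_op (mult_op (\<lambda>n. of_real ((cmod (d n))\<^sup>2)))"
    using B by (intro bounded_op_mult_op[of _ "B\<^sup>2"]) (simp add: norm_power power_mono)
  fix x assume x: "x \<in> l2"
  show "(adj (perm_op p \<circ> mult_op d) \<circ> (perm_op p \<circ> mult_op d)) x
    = mult_op (\<lambda>n. of_real ((cmod (d n))\<^sup>2)) x"
    unfolding adj_perm_op_comp_mult_op[OF p B]
    using x l2_mult(1)[where d=d, OF x B] l2_reindex(1)[OF p l2_mult(1)[where d=d, OF x B]] bij_is_surj[OF p]
    by (simp add: perm_op_def mult_op_def surj_f_inv_f fun_eq_iff mult.assoc
        mult.commute[of "cnj _"] flip: complex_norm_square)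
qed

lemma positive_sqrt_mult_op_two_valued:
  fixes a b :: real
  assumes A: "positive_op A" and AA: "A \<circ> A = mult_op (\<lambda>n. of_real ((r n)\<^sup>2))"
    and r: "\<And>n. r n = (if P n then a else b)" and a: "a > 0" and b: "b > 0"
  shows "A = mult_op (\<lambda>n. of_real (r n))"
proof (rule bounded_op_eqI)
  show Ab: "bounded_op A" using A by (simp add: positive_op_def)
  show "bounded_op (mult_op (\<lambda>n. of_real (r n)))"
    using r a b by (intro bounded_op_mult_op[of _ "max a b"]) simp
  have eigen: "A z = (\<lambda>n. of_real c * z n)"
    if z: "z \<in> l2" and c: "c > 0" and supp: "\<And>n. z n \<noteq> 0 \<Longrightarrow> r n = c" for z c
  proof (rule positive_op_sqrt_eigenvector[OF A z c])
    have "A (A z) = mult_op (\<lambda>n. of_real ((r n)\<^sup>2)) z" using AA by (metis comp_apply)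
    also have "\<dots> = (\<lambda>n. of_real (c\<^sup>2) * z n)"
      using z supp by (auto simp: mult_op_def fun_eq_iff)
    finally show "A (A z) = (\<lambda>n. of_real (c\<^sup>2) * z n)" .
  qed
  fix x assume x: "x \<in> l2"
  define xP where "xP = (\<lambda>n. (if P n then 1 else 0) * x n)"
  define xN where "xN = (\<lambda>n. (if P n then 0 else 1) * x n)"
  have xP: "xP \<in> l2" and xN: "xN \<in> l2"
    unfolding xP_def xN_def by (rule l2_mult(1)[OF x, of _ 1], simp)+
  have "x = (\<lambda>n. 1 * xP n + 1 * xN n)" by (simp add: xP_def xN_def fun_eq_iff)
  hence "A x = A (\<lambda>n. 1 * xP n + 1 * xN n)" by simp
  also have "\<dots> = (\<lambda>n. 1 * A xP n + 1 * A xN n)" by (rule bounded_op_lincomb[OF Ab xP xN])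
  also have "A xP = (\<lambda>n. of_real a * xP n)" by (rule eigen[OF xP a]) (simp add: xP_def r split: if_splits)
  also have "A xN = (\<lambda>n. of_real b * xN n)" by (rule eigen[OF xN b]) (simp add: xN_def r split: if_splits)
  finally show "A x = mult_op (\<lambda>n. of_real (r n)) x"
    using x by (simp add: mult_op_def xP_def xN_def r fun_eq_iff)
qed

definition swap_pair :: "nat \<Rightarrow> nat" where
  "swap_pair n = (if even n then Suc n else n - 1)"

lemma swap_pair_swap_pair [simp]: "swap_pair (swap_pair n) = n"
  by (simp add: swap_pair_def)

lemma bij_swap_pair: "bij swap_pair"
  by (rule o_bij[of swap_pair]) (simp_all add: fun_eq_iff)

definition weight :: "nat \<Rightarrow> real" where
  "weight n = (if even n then 2 else 1/2)"

definition weighted_swap :: op where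
  "weighted_swap = perm_op swap_pair \<circ> mult_op (\<lambda>n. of_real (weight n))"

lemma weight_add_weight_swap_pair: "weight n + weight (swap_pair n) = 5/2"
  by (simp add: weight_def swap_pair_def)

lemma l2_mult_weight: "x \<in> l2 \<Longrightarrow> (\<lambda>n. of_real (weight n) * x n) \<in> l2"
  by (rule l2_mult(1)[of _ _ 2]) (simp_all add: weight_def)

lemma bounded_op_weighted_swap: "bounded_op weighted_swap"
  unfolding weighted_swap_def
  by (intro bounded_op_comp bounded_op_perm_op bij_swap_pair bounded_op_mult_op[of _ 2])
    (simp add: weight_def)

lemma absop_weighted_swap: "absop weighted_swap = mult_op (\<lambda>n. of_real (weight n))"
  unfolding absop_def
proof (rule the_equality)
  have adj_self: "adj weighted_swap \<circ> weighted_swap = mult_op (\<lambda>n. of_real ((weight n)\<^sup>2))"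
    using adj_perm_op_comp_mult_op_comp_self[OF bij_swap_pair, of "\<lambda>n. of_real (weight n)" 2]
    by (simp add: weighted_swap_def weight_def)
  moreover have "mult_op (\<lambda>n. of_real (weight n)) \<circ> mult_op (\<lambda>n. of_real (weight n))
      = mult_op (\<lambda>n. of_real ((weight n)\<^sup>2))"
    by (subst mult_op_comp[of _ 2]) (simp_all add: weight_def power2_eq_square)
  moreover have "positive_op (mult_op (\<lambda>n. of_real (weight n)))"
    by (rule positive_op_mult_op[of _ 2]) (simp_all add: weight_def)
  ultimately show "positive_op (mult_op (\<lambda>n. of_real (weight n))) \<and>
      mult_op (\<lambda>n. of_real (weight n)) \<circ> mult_op (\<lambda>n. of_real (weight n))
      = adj weighted_swap \<circ> weighted_swap"
    by simp
  fix A assume A: "positive_op A \<and> A \<circ> A = adj weighted_swap \<circ> weighted_swap"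
  show "A = mult_op (\<lambda>n. of_real (weight n))"
  proof (rule positive_sqrt_mult_op_two_valued[where P=even and a=2 and b="1/2"])
    show "positive_op A" "A \<circ> A = mult_op (\<lambda>n. of_real ((weight n)\<^sup>2))"
      using A adj_self by simp_all
  qed (simp_all add: weight_def)
qed

lemma polarV_weighted_swap: "polarV weighted_swap = perm_op swap_pair"
proof (rule polarV_eqI)
  show "partial_isometry (perm_op swap_pair)" by (rule partial_isometry_perm_op[OF bij_swap_pair])
  have "x (swap_pair n) = 0 \<longleftrightarrow> of_real (weight (swap_pair n)) * x (swap_pair n) = 0"
    for x :: "nat \<Rightarrow> complex" and n
    by (simp add: weight_def)
  thus "kernel (perm_op swap_pair) = kernel weighted_swap"
    by (auto simp: kernel_def weighted_swap_def perm_op_def mult_op_def fun_eq_iff l2_mult_weight)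
  show "weighted_swap = perm_op swap_pair \<circ> absop weighted_swap"
    unfolding absop_weighted_swap by (simp add: weighted_swap_def)
  fix y assume y: "y \<in> l2"
  have "(\<lambda>n. of_real (1 / weight n) * y n) \<in> l2"
    by (rule l2_mult(1)[OF y, of _ 2]) (simp add: weight_def)
  moreover have "(\<lambda>n. of_real (weight n) * (of_real (1 / weight n) * y n)) = y"
    by (simp add: weight_def fun_eq_iff)
  ultimately show "\<exists>z. absop weighted_swap z = y"
    unfolding absop_weighted_swap mult_op_def by (intro exI[of _ "\<lambda>n. of_real (1 / weight n) * y n"]) simp
qed

lemma mean_transform_weighted_swap:
  "mean_transform weighted_swap = perm_op swap_pair \<circ> mult_op (\<lambda>_. 5/4)"
proof (intro ext)
  fix x n
  have w: "complex_of_real (weight n) + complex_of_real (weight (swap_pair n)) = 5/2"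
    by (simp add: weight_add_weight_swap_pair flip: of_real_add)
  have "(\<lambda>n. x (swap_pair n)) \<in> l2" "(\<lambda>n. of_real (weight n) * x n) \<in> l2"
    "(\<lambda>n. 5/4 * x n) \<in> l2" if "x \<in> l2"
    using l2_reindex(1)[OF bij_swap_pair that] l2_mult_weight[OF that]
      l2_mult(1)[OF that, of "\<lambda>_. 5/4" "5/4"] by simp_all
  then show "mean_transform weighted_swap x n = (perm_op swap_pair \<circ> mult_op (\<lambda>_. 5/4)) x n"
    unfolding mean_transform_def absop_weighted_swap polarV_weighted_swap
    by (simp add: mult_op_def perm_op_def w flip: distrib_right)
qed

definition similarity_weight :: "nat \<Rightarrow> real" where
  "similarity_weight n = (if even n then 1 else 2)"

lemma similarity_weighted_swap:
  "mult_op (\<lambda>n. of_real (1 / similarity_weight n)) \<circ> weighted_swap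
     \<circ> mult_op (\<lambda>n. of_real (similarity_weight n)) = perm_op swap_pair"
proof (rule bounded_op_eqI)
  show "bounded_op (mult_op (\<lambda>n. of_real (1 / similarity_weight n)) \<circ> weighted_swap
     \<circ> mult_op (\<lambda>n. of_real (similarity_weight n)))"
    by (intro bounded_op_comp bounded_op_weighted_swap bounded_op_mult_op[of _ 2])
      (simp_all add: similarity_weight_def)
  show "bounded_op (perm_op swap_pair)" by (rule bounded_op_perm_op[OF bij_swap_pair])
  fix x assume x: "x \<in> l2"
  define Lx where "Lx = (\<lambda>n. of_real (similarity_weight n) * x n)"
  have Lx: "Lx \<in> l2" unfolding Lx_def by (rule l2_mult(1)[OF x, of _ 2]) (simp add: similarity_weight_def)
  have TLx: "(\<lambda>n. of_real (weight (swap_pair n)) * Lx (swap_pair n)) \<in> l2"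
    using l2_reindex(1)[OF bij_swap_pair l2_mult_weight[OF Lx]] by simp
  have "of_real (1 / similarity_weight n) * (of_real (weight (swap_pair n)) * Lx (swap_pair n))
      = x (swap_pair n)" for n
    by (simp add: Lx_def similarity_weight_def weight_def swap_pair_def)
  with x Lx TLx l2_mult_weight[OF Lx]
  show "(mult_op (\<lambda>n. of_real (1 / similarity_weight n)) \<circ> weighted_swap
     \<circ> mult_op (\<lambda>n. of_real (similarity_weight n))) x = perm_op swap_pair x"
    by (simp add: weighted_swap_def mult_op_def perm_op_def flip: Lx_def)
qed

lemma similar_to_contraction_weighted_swap: "similar_to_contraction weighted_swap"
  unfolding similar_to_contraction_def
proof (intro exI conjI ballI)
  show "bounded_op (mult_op (\<lambda>n. of_real (similarity_weight n)))"
    "bounded_op (mult_op (\<lambda>n. of_real (1 / similarity_weight n)))"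
    by (rule bounded_op_mult_op[of _ 2]; simp add: similarity_weight_def)+
  fix x assume x: "x \<in> l2"
  have "(\<lambda>n. of_real (similarity_weight n) * x n) \<in> l2"
    "(\<lambda>n. of_real (1 / similarity_weight n) * x n) \<in> l2"
    by (rule l2_mult(1)[OF x, of _ 2]; simp add: similarity_weight_def)+
  with x show
    "mult_op (\<lambda>n. of_real (1 / similarity_weight n)) (mult_op (\<lambda>n. of_real (similarity_weight n)) x)
      = x"
    "mult_op (\<lambda>n. of_real (similarity_weight n)) (mult_op (\<lambda>n. of_real (1 / similarity_weight n)) x)
      = x"
    by (simp_all add: mult_op_def similarity_weight_def fun_eq_iff)
next
  show "opnorm (mult_op (\<lambda>n. of_real (1 / similarity_weight n)) \<circ> weighted_swap
     \<circ> mult_op (\<lambda>n. of_real (similarity_weight n))) \<le> 1"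
    unfolding similarity_weighted_swap
    by (rule opnorm_le) (simp_all add: perm_op_def l2_reindex bij_swap_pair)
qed

theorem mainTheorem11:
  shows "\<exists>T. bounded_op T \<and> similar_to_contraction T \<and> \<not> power_bounded (mean_transform T)"
proof (intro exI conjI)
  show "bounded_op weighted_swap" by (rule bounded_op_weighted_swap)
  show "similar_to_contraction weighted_swap" by (rule similar_to_contraction_weighted_swap)
  show "\<not> power_bounded (mean_transform weighted_swap)"
    unfolding mean_transform_weighted_swap
  proof (rule not_power_bounded_if_stretching[where c="5/4"])
    fix x :: "nat \<Rightarrow> complex" assume x: "x \<in> l2"
    have x': "(\<lambda>n. 5/4 * x n) \<in> l2" by (rule l2_mult(1)[OF x, of _ "5/4"]) simp
    with x show "(perm_op swap_pair \<circ> mult_op (\<lambda>_. 5/4)) x \<in> l2 \<and>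
        l2norm ((perm_op swap_pair \<circ> mult_op (\<lambda>_. 5/4)) x) = 5/4 * l2norm x"
      using l2_reindex[OF bij_swap_pair x'] l2norm_scale[OF x, of "5/4"]
      by (simp add: perm_op_def mult_op_def)
  qed simp
qed

end
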